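(* For every surjective $\boxplus$-morphism $\phi:[1]^{m+n+1}\to[1]^{n+1}$ there exist monotone functions $\phi_i:[1]^{k_i}\to[1]$, $1\leq i\leq n+1$, with $k_1+\cdots+k_{n+1}=m+n+1$, and a coordinate permutation $g$ of $[1]^{m+n+1}$ such that $\phi=(\phi_1\times\phi_2\times\cdots\times\phi_{n+1})\circ g$.
   Context: $[1]=\{0<1\}$, $[1]^n$ the product poset ($[1]^0=[0]$). An interval in a poset is a non-empty subset $[x,z]=\{y:x\leq y\leq z\}$. $\boxplus$ is the category whose objects are the $[1]^n$ ($n\geq0$) and whose morphisms are the monotone functions mapping every interval onto an interval. $\phi_1\times\cdots\times\phi_{n+1}:[1]^{k_1+\cdots+k_{n+1}}\to[1]^{n+1}$ is the Cartesian product of functions. *)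

theory Defs
  imports "HOL-Combinatorics.Permutations"
begin

text \<open>The poset [1]^n: bool lists of length n (False < True), ordered componentwise.\<close>

definition cube :: "nat \<Rightarrow> bool list set" where
  "cube n = {xs. length xs = n}"

definition cle :: "bool list \<Rightarrow> bool list \<Rightarrow> bool" where
  "cle xs ys = list_all2 (\<le>) xs ys"

definition cinterval :: "nat \<Rightarrow> bool list \<Rightarrow> bool list \<Rightarrow> bool list set" where
  "cinterval n x z = {y \<in> cube n. cle x y \<and> cle y z}"

definition is_interval :: "nat \<Rightarrow> bool list set \<Rightarrow> bool" where
  "is_interval n S \<longleftrightarrow> (\<exists>x\<in>cube n. \<exists>z\<in>cube n. cle x z \<and> S = cinterval n x z)"

definition cmono :: "nat \<Rightarrow> (bool list \<Rightarrow> 'b) \<Rightarrow> ('b \<Rightarrow> 'b \<Rightarrow> bool) \<Rightarrow> bool" where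
  "cmono m f r \<longleftrightarrow> (\<forall>x\<in>cube m. \<forall>y\<in>cube m. cle x y \<longrightarrow> r (f x) (f y))"

text \<open>Morphisms of the box category from [1]^m to [1]^n (considered on cube m).\<close>
definition box_morphism :: "nat \<Rightarrow> nat \<Rightarrow> (bool list \<Rightarrow> bool list) \<Rightarrow> bool" where
  "box_morphism m n f \<longleftrightarrow>
     f ` cube m \<subseteq> cube n \<and> cmono m f cle \<and>
     (\<forall>S. is_interval m S \<longrightarrow> is_interval n (f ` S))"

definition coord_perm :: "nat \<Rightarrow> (nat \<Rightarrow> nat) \<Rightarrow> bool list \<Rightarrow> bool list" where
  "coord_perm N \<sigma> x = map (\<lambda>j. x ! \<sigma> j) [0..<N]"

text \<open>Cartesian product \<phi>_0 \<times> ... \<times> \<phi>_{p-1} : [1]^{k_0+...+k_{p-1}} \<rightarrow> [1]^p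
  (0-indexed blocks of consecutive coordinates).\<close>
definition prod_map :: "nat \<Rightarrow> (nat \<Rightarrow> nat) \<Rightarrow> (nat \<Rightarrow> bool list \<Rightarrow> bool) \<Rightarrow> bool list \<Rightarrow> bool list" where
  "prod_map p k \<phi> y = map (\<lambda>i. \<phi> i (take (k i) (drop (\<Sum>j<i. k j) y))) [0..<p]"

end

theory Submission
  imports Defs
begin

text \<open>Say that input coordinate \<open>j\<close> raises output coordinate \<open>a\<close> at \<open>x\<close> if switching on
  coordinate \<open>j\<close> of \<open>x\<close> switches on coordinate \<open>a\<close> of \<open>\<phi> x\<close>. The heart of the proof is that every
  input coordinate raises at most one output coordinate. Then output \<open>a\<close> depends only on the
  inputs raising it, and grouping the inputs by the output they raise exhibits \<open>\<phi>\<close> as a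
  permuted product of monotone maps.

  Uniqueness is proved by induction on the Hamming distance of two witnesses \<open>x\<close>, \<open>y\<close> at which
  \<open>j\<close> raises \<open>a\<close> and \<open>b \<noteq> a\<close>. By minimality, output \<open>a\<close> is on at every point of the interval
  \<open>[x, (x \<or> y) + e\<^sub>j]\<close> other than \<open>x\<close>; as its image is an interval, \<open>\<phi>\<close> is constantly
  \<open>\<phi> x + e\<^sub>a\<close> there. Dually \<open>\<phi>\<close> is constantly \<open>\<phi> x\<close> on \<open>[x \<and> y, x + e\<^sub>j]\<close> minus its top.
  The same holds for \<open>y\<close> and \<open>b\<close>, and evaluating at the shared points \<open>(x \<or> y) + e\<^sub>j\<close> and
  \<open>x \<and> y\<close> gives \<open>\<phi> x = \<phi> y\<close> and \<open>\<phi> x + e\<^sub>a = \<phi> y + e\<^sub>b\<close>, which is absurd.\<close>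

section \<open>Intervals of the cube\<close>

lemma cle_iff: "cle u v \<longleftrightarrow> length u = length v \<and> (\<forall>l<length u. u ! l \<longrightarrow> v ! l)"
  unfolding cle_def list_all2_conv_all_nth by auto

lemma cle_refl [simp]: "cle u u"
  by (simp add: cle_iff)

lemma cle_trans: "cle u v \<Longrightarrow> cle v w \<Longrightarrow> cle u w"
  by (auto simp: cle_iff)

lemma cle_antisym: "cle u v \<Longrightarrow> cle v u \<Longrightarrow> u = v"
  by (auto simp: cle_iff intro: nth_equalityI)

lemma cle_list_update_True: "cle x (x[j := True])"
  unfolding cle_iff by (cases "j < length x") (auto simp: nth_list_update)

lemma cle_list_update_False: "cle (x[j := False]) x"
  unfolding cle_iff by (cases "j < length x") (auto simp: nth_list_update)

lemma mem_cube_iff [simp]: "x \<in> cube n \<longleftrightarrow> length x = n"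
  by (simp add: cube_def)

lemma mem_cinterval_iff: "w \<in> cinterval n u v \<longleftrightarrow> length w = n \<and> cle u w \<and> cle w v"
  by (simp add: cinterval_def)

lemma list_update_mem_cinterval:
  assumes "e \<in> cinterval n u v" and "s \<in> cinterval n u v"
  shows "e[c := s ! c] \<in> cinterval n u v"
proof -
  have "(e[c := s ! c] ! l = e ! l) \<or> (e[c := s ! c] ! l = s ! l)" for l
    by (cases "l = c"; cases "c < length e") (auto simp: list_update_beyond)
  then show ?thesis
    using assms unfolding mem_cinterval_iff cle_iff by (metis length_list_update)
qed

text \<open>Moving a single coordinate of \<open>e\<close> to its value at another point of the interval stays
  inside the interval, so such a move can only change coordinate \<open>a\<close>.\<close>
lemma cinterval_single_flip:
  assumes e: "e \<in> cinterval n u v" and s: "s \<in> cinterval n u v" "s \<noteq> e"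
    and flip: "\<And>s'. s' \<in> cinterval n u v \<Longrightarrow> s' \<noteq> e \<Longrightarrow> s' ! a \<noteq> e ! a"
  shows "s = e[a := \<not> e ! a]"
proof (rule nth_equalityI)
  have len: "length s = n" "length e = n"
    using e s by (auto simp: mem_cinterval_iff)
  then show "length s = length (e[a := \<not> e ! a])"
    by simp
  fix c assume c: "c < length s"
  show "s ! c = e[a := \<not> e ! a] ! c"
  proof (cases "c = a")
    case True
    then show ?thesis using flip[OF s] c len by simp
  next
    case False
    have "e[c := s ! c] ! a = e ! a"
      using False by simp
    then have "e[c := s ! c] = e"
      using flip[OF list_update_mem_cinterval[OF e s(1)]] by blast
    then show ?thesis
      using False c len by (metis nth_list_update_eq nth_list_update_neq)
  qed
qed

lemma cle_neq_imp_nth: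
  assumes "cle u v" and "u \<noteq> v"
  obtains l where "l < length u" "\<not> u ! l" "v ! l"
proof -
  have "length u = length v"
    using assms(1) by (simp add: cle_iff)
  then have "\<exists>l<length u. u ! l \<noteq> v ! l"
    using assms(2) nth_equalityI by blast
  then show ?thesis
    using assms(1) that by (auto simp: cle_iff)
qed

definition hamming :: "bool list \<Rightarrow> bool list \<Rightarrow> nat" where
  "hamming x y = card {l. l < length x \<and> x ! l \<noteq> y ! l}"

lemma hamming_sym: "length x = length y \<Longrightarrow> hamming x y = hamming y x"
  unfolding hamming_def by (metis (lifting))

lemma hamming_list_update_less:
  assumes "l < length x" and "x ! l \<noteq> y ! l"
  shows "hamming (x[l := y ! l]) y < hamming x y"
proof -
  define D where "D = {i. i < length x \<and> x ! i \<noteq> y ! i}"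
  have "hamming (x[l := y ! l]) y = card (D - {l})"
    unfolding hamming_def D_def using assms(1) by (auto simp: nth_list_update intro!: arg_cong[where f = card])
  also have "\<dots> < card D"
    using assms by (intro card_Diff1_less) (auto simp: D_def)
  finally show ?thesis
    by (simp add: hamming_def D_def)
qed

section \<open>Permuted products of monotone maps\<close>

definition scatter :: "nat \<Rightarrow> nat list \<Rightarrow> bool list \<Rightarrow> bool list" where
  "scatter N F ys = map (\<lambda>l. map_of (zip F ys) l = Some True) [0..<N]"

lemma length_scatter [simp]: "length (scatter N F ys) = N"
  by (simp add: scatter_def)

lemma nth_scatter_nth:
  assumes "distinct F" "set F \<subseteq> {..<N}" "length ys = length F" "t < length F"
  shows "scatter N F ys ! (F ! t) = ys ! t"
proof -
  have "F ! t < N"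
    using assms(2,4) nth_mem by blast
  moreover have "map_of (zip F ys) (F ! t) = Some (ys ! t)"
    using map_of_zip_nth assms(1,3,4) by metis
  ultimately show ?thesis
    unfolding scatter_def by simp
qed

lemma nth_scatter_notin:
  assumes "l < N" "l \<notin> set F" "length ys = length F"
  shows "\<not> scatter N F ys ! l"
proof -
  have "map_of (zip F ys) l = None"
    using assms(2,3) by simp
  then show ?thesis
    using assms(1) unfolding scatter_def by simp
qed

lemma nth_scatter_map_nth:
  assumes "distinct F" "set F \<subseteq> {..<N}" "l \<in> set F"
  shows "scatter N F (map ((!) x) F) ! l = x ! l"
proof -
  obtain t where "t < length F" "l = F ! t"
    using assms(3) by (auto simp: in_set_conv_nth)
  then show ?thesis
    using nth_scatter_nth[OF assms(1,2), of "map ((!) x) F" t] by simp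
qed

lemma cle_scatter:
  assumes "distinct F" "set F \<subseteq> {..<N}" "length ys = length F" and "cle ys ys'"
  shows "cle (scatter N F ys) (scatter N F ys')"
  unfolding cle_iff
proof (intro conjI allI impI)
  fix l assume l: "l < length (scatter N F ys)" and ys_l: "scatter N F ys ! l"
  have ys': "length ys' = length F"
    using assms(3,4) by (simp add: cle_iff)
  show "scatter N F ys' ! l"
  proof (cases "l \<in> set F")
    case True
    then obtain t where t: "t < length F" "l = F ! t"
      by (auto simp: in_set_conv_nth)
    then show ?thesis
      using ys_l assms(4) nth_scatter_nth[OF assms(1,2,3) t(1)] nth_scatter_nth[OF assms(1,2) ys' t(1)]
      by (simp add: cle_iff assms(3))
  next
    case False
    then show ?thesis
      using l ys_l nth_scatter_notin assms(3) by simp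
  qed
qed simp

lemma cmono_scatter:
  assumes "distinct F" "set F \<subseteq> {..<N}"
    and mono: "\<And>x y. length x = N \<Longrightarrow> cle x y \<Longrightarrow> f x \<Longrightarrow> f y"
  shows "cmono (length F) (\<lambda>ys. f (scatter N F ys)) (\<le>)"
  unfolding cmono_def le_bool_def
proof (intro ballI impI)
  fix ys ys' assume "ys \<in> cube (length F)" "cle ys ys'" "f (scatter N F ys)"
  then show "f (scatter N F ys')"
    using mono[OF length_scatter cle_scatter[OF assms(1,2)]] by simp
qed

lemma concat_filter_classes:
  assumes "distinct xs"
  shows "distinct (concat (map (\<lambda>i. filter (\<lambda>l. c l = i) xs) [0..<q]))"
    and "set (concat (map (\<lambda>i. filter (\<lambda>l. c l = i) xs) [0..<q])) = {l \<in> set xs. c l < q}"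
proof -
  show "set (concat (map (\<lambda>i. filter (\<lambda>l. c l = i) xs) [0..<q])) = {l \<in> set xs. c l < q}"
    by auto
  show "distinct (concat (map (\<lambda>i. filter (\<lambda>l. c l = i) xs) [0..<q]))"
  proof (induction q)
    case (Suc q)
    then show ?case
      using assms by (auto simp: distinct_append)
  qed simp
qed

lemma take_drop_concat:
  "i < length xss \<Longrightarrow> take (length (xss ! i)) (drop (\<Sum>j<i. length (xss ! j)) (concat xss)) = xss ! i"
proof (induction xss arbitrary: i)
  case (Cons xs xss)
  show ?case
  proof (cases i)
    case (Suc i')
    have "(\<Sum>j<Suc i'. length ((xs # xss) ! j)) = length xs + (\<Sum>j<i'. length (xss ! j))"
      by (simp only: sum.lessThan_Suc_shift) simp
    then show ?thesis
      using Cons Suc by simp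
  qed simp
qed simp

lemma prod_map_concat:
  "prod_map p (\<lambda>i. length (xs i)) \<phi>s (concat (map xs [0..<p])) = map (\<lambda>i. \<phi>s i (xs i)) [0..<p]"
  using take_drop_concat[of _ "map xs [0..<p]"] unfolding prod_map_def by simp

lemma permutes_of_list:
  assumes "distinct L" and "set L = {0..<N}"
  shows "(\<lambda>t. if t < N then L ! t else t) permutes {0..<N}"
proof (rule bij_imp_permutes)
  have "length L = N"
    using assms distinct_card by fastforce
  then have "bij_betw ((!) L) {0..<N} {0..<N}"
    using bij_betw_nth[OF assms(1)] assms(2) by (simp add: atLeast0LessThan)
  then show "bij_betw (\<lambda>t. if t < N then L ! t else t) {0..<N} {0..<N}"
    by (rule bij_betw_cong[THEN iffD1, rotated]) simp
qed simp

lemma coord_perm_of_list: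
  assumes "length L = N"
  shows "coord_perm N (\<lambda>t. if t < N then L ! t else t) x = map ((!) x) L"
proof -
  have "coord_perm N (\<lambda>t. if t < N then L ! t else t) x = map ((!) x) (map ((!) L) [0..<length L])"
    unfolding coord_perm_def assms[symmetric] by simp
  then show ?thesis
    by (simp only: map_nth)
qed

text \<open>The permutation lists the coordinates \<open>l\<close> with \<open>c l = 0\<close> first, then those with \<open>c l = 1\<close>,
  and so on; the \<open>i\<close>-th factor evaluates \<open>f\<close> on its block scattered into an otherwise false input.\<close>
lemma prod_map_decomposition:
  fixes f :: "bool list \<Rightarrow> bool list" and c :: "nat \<Rightarrow> nat"
  assumes c: "\<And>l. l < N \<Longrightarrow> c l < p"
    and length: "\<And>x. length x = N \<Longrightarrow> length (f x) = p"
    and mono: "\<And>x y i. length x = N \<Longrightarrow> cle x y \<Longrightarrow> i < p \<Longrightarrow> f x ! i \<Longrightarrow> f y ! i"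
    and local: "\<And>x x' i. length x = N \<Longrightarrow> length x' = N \<Longrightarrow> i < p \<Longrightarrow>
                  (\<And>l. l < N \<Longrightarrow> c l = i \<Longrightarrow> x ! l = x' ! l) \<Longrightarrow> f x ! i = f x' ! i"
  shows "\<exists>(k :: nat \<Rightarrow> nat) (\<phi>s :: nat \<Rightarrow> bool list \<Rightarrow> bool) (\<sigma> :: nat \<Rightarrow> nat).
           (\<Sum>i<p. k i) = N \<and>
           (\<forall>i<p. cmono (k i) (\<phi>s i) (\<le>)) \<and>
           \<sigma> permutes {0..<N} \<and>
           (\<forall>x\<in>cube N. f x = prod_map p k \<phi>s (coord_perm N \<sigma> x))"
proof (intro exI conjI)
  define F where "F i = filter (\<lambda>l. c l = i) [0..<N]" for i
  define L where "L = concat (map F [0..<p])"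
  define \<sigma> where "\<sigma> t = (if t < N then L ! t else t)" for t
  define \<phi>s where "\<phi>s i ys = f (scatter N (F i) ys) ! i" for i ys
  have F: "distinct (F i)" "set (F i) \<subseteq> {..<N}" for i
    unfolding F_def by auto
  have L: "distinct L" "set L = {0..<N}"
    using concat_filter_classes[of "[0..<N]" c p] c unfolding L_def F_def by auto
  then show "\<sigma> permutes {0..<N}"
    unfolding \<sigma>_def by (rule permutes_of_list)
  have "length L = N"
    using L distinct_card by fastforce
  then show "(\<Sum>i<p. length (F i)) = N"
    by (simp add: L_def length_concat comp_def sum_set_upt_conv_sum_list_nat[symmetric] atLeast0LessThan)
  show "\<forall>i<p. cmono (length (F i)) (\<phi>s i) (\<le>)"
  proof (intro allI impI)
    fix i assume "i < p"
    have "cmono (length (F i)) (\<lambda>ys. f (scatter N (F i) ys) ! i) (\<le>)"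
      by (rule cmono_scatter[OF F]) (rule mono[OF _ _ \<open>i < p\<close>])
    then show "cmono (length (F i)) (\<phi>s i) (\<le>)"
      by (simp add: \<phi>s_def[abs_def])
  qed
  show "\<forall>x\<in>cube N. f x = prod_map p (\<lambda>i. length (F i)) \<phi>s (coord_perm N \<sigma> x)"
  proof
    fix x :: "bool list" assume "x \<in> cube N"
    then have lx: "length x = N"
      by simp
    have nth_f: "f x ! i = \<phi>s i (map ((!) x) (F i))" if i: "i < p" for i
    proof -
      have "scatter N (F i) (map ((!) x) (F i)) ! l = x ! l" if "l < N" "c l = i" for l
        using nth_scatter_map_nth[OF F(1)[of i] F(2)[of i]] that by (simp add: F_def)
      then show ?thesis
        unfolding \<phi>s_def using local[OF _ lx i] by simp
    qed
    have "f x = map (\<lambda>i. \<phi>s i (map ((!) x) (F i))) [0..<p]"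
      using length[OF lx] nth_f by (intro nth_equalityI) simp_all
    also have "\<dots> = prod_map p (\<lambda>i. length (map ((!) x) (F i))) \<phi>s
                        (concat (map (\<lambda>i. map ((!) x) (F i)) [0..<p]))"
      by (rule prod_map_concat[symmetric])
    also have "\<dots> = prod_map p (\<lambda>i. length (F i)) \<phi>s (map ((!) x) L)"
      by (simp add: L_def map_concat comp_def)
    finally show "f x = prod_map p (\<lambda>i. length (F i)) \<phi>s (coord_perm N \<sigma> x)"
      unfolding \<sigma>_def coord_perm_of_list[OF \<open>length L = N\<close>] by simp
  qed
qed

section \<open>Box morphisms\<close>

locale box_map =
  fixes N p :: nat and \<phi> :: "bool list \<Rightarrow> bool list"
  assumes box_morphism: "box_morphism N p \<phi>"
begin

lemma length_image: "length x = N \<Longrightarrow> length (\<phi> x) = p"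
  using box_morphism unfolding box_morphism_def by (auto simp: image_subset_iff)

lemma image_mono:
  assumes "length x = N" and "cle x y"
  shows "cle (\<phi> x) (\<phi> y)"
proof -
  have "length y = N"
    using assms by (simp add: cle_iff)
  moreover have "cmono N \<phi> cle"
    using box_morphism unfolding box_morphism_def by blast
  ultimately show ?thesis
    using assms unfolding cmono_def by simp
qed

lemma nth_image_mono:
  assumes "length x = N" and "cle x y" and "a < p" and "\<phi> x ! a"
  shows "\<phi> y ! a"
  using image_mono[OF assms(1,2)] length_image[OF assms(1)] assms(3,4) by (simp add: cle_iff)

lemma image_cinterval:
  assumes "length u = N" and "cle u v"
  shows "\<phi> ` cinterval N u v = cinterval p (\<phi> u) (\<phi> v)"
proof -
  have "length v = N"
    using assms by (simp add: cle_iff)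
  then have u: "u \<in> cinterval N u v" and v: "v \<in> cinterval N u v"
    using assms by (simp_all add: mem_cinterval_iff)
  have "is_interval N (cinterval N u v)"
    unfolding is_interval_def using assms \<open>length v = N\<close> by (intro bexI[of _ u] bexI[of _ v]) auto
  then have "is_interval p (\<phi> ` cinterval N u v)"
    using box_morphism unfolding box_morphism_def by blast
  then obtain P Q where PQ: "P \<in> cube p" "Q \<in> cube p" "cle P Q"
    and image: "\<phi> ` cinterval N u v = cinterval p P Q"
    unfolding is_interval_def by blast
  have bounds: "cle (\<phi> u) s \<and> cle s (\<phi> v)" if s: "s \<in> \<phi> ` cinterval N u v" for s
  proof -
    obtain w where "w \<in> cinterval N u v" and "s = \<phi> w"
      using s by blast
    then show ?thesis
      using image_mono assms(1) by (simp add: mem_cinterval_iff)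
  qed
  have "P \<in> cinterval p P Q" "Q \<in> cinterval p P Q"
    using PQ by (simp_all add: mem_cinterval_iff cle_refl)
  moreover have "\<phi> u \<in> cinterval p P Q" "\<phi> v \<in> cinterval p P Q"
    using image u v by blast+
  ultimately have "P = \<phi> u" "Q = \<phi> v"
    using bounds image by (auto simp: mem_cinterval_iff intro: cle_antisym)
  then show ?thesis
    using image by simp
qed

lemma image_flip_on_cinterval:
  assumes "length u = N" and "cle u v" and e: "e \<in> cinterval N u v"
    and flip: "\<And>w. w \<in> cinterval N u v \<Longrightarrow> w \<noteq> e \<Longrightarrow> \<phi> w ! a \<noteq> \<phi> e ! a"
    and w: "w \<in> cinterval N u v" "w \<noteq> e"
  shows "\<phi> w = (\<phi> e)[a := \<not> \<phi> e ! a]"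
proof (rule cinterval_single_flip)
  note image = image_cinterval[OF assms(1,2)]
  show "\<phi> e \<in> cinterval p (\<phi> u) (\<phi> v)" "\<phi> w \<in> cinterval p (\<phi> u) (\<phi> v)"
    using e w image by blast+
  show "\<phi> w \<noteq> \<phi> e"
    using flip[OF w] by metis
  show "s ! a \<noteq> \<phi> e ! a" if "s \<in> cinterval p (\<phi> u) (\<phi> v)" "s \<noteq> \<phi> e" for s
    using that flip image by (metis imageE)
qed

definition raises :: "nat \<Rightarrow> bool list \<Rightarrow> nat \<Rightarrow> bool" where
  "raises j x a \<longleftrightarrow> length x = N \<and> \<not> x ! j \<and> a < p \<and> \<not> \<phi> x ! a \<and> \<phi> (x[j := True]) ! a"

lemma raises_imp_less: "raises j x a \<Longrightarrow> j < N"
  unfolding raises_def by (metis linorder_not_less list_update_beyond)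

lemma raises_list_update_True:
  assumes "raises j x a" and "l \<noteq> j" and "\<not> \<phi> (x[l := True]) ! a"
  shows "raises j (x[l := True]) a"
proof -
  have "cle (x[j := True]) (x[l := True, j := True])"
    using assms(2) cle_list_update_True by (metis list_update_swap)
  then have "\<phi> (x[l := True, j := True]) ! a"
    using assms(1) nth_image_mono[of "x[j := True]"] unfolding raises_def by simp
  then show ?thesis
    using assms unfolding raises_def by simp
qed

lemma raises_list_update_False:
  assumes "raises j x a" and "l \<noteq> j" and "\<phi> (x[l := False, j := True]) ! a"
  shows "raises j (x[l := False]) a"
proof -
  have "\<not> \<phi> (x[l := False]) ! a"
    using assms(1) nth_image_mono[OF _ cle_list_update_False] unfolding raises_def by force
  then show ?thesis
    using assms unfolding raises_def by auto
qed

lemma raises_above: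
  assumes x: "raises j x a"
    and up: "\<And>l. l < N \<Longrightarrow> l \<noteq> j \<Longrightarrow> \<not> x ! l \<Longrightarrow> W ! l \<Longrightarrow> \<phi> (x[l := True]) ! a"
    and w: "w \<in> cinterval N x W" "w \<noteq> x"
  shows "\<phi> w ! a"
proof -
  have lx: "length x = N" and a: "a < p" and x1: "\<phi> (x[j := True]) ! a"
    using x unfolding raises_def by auto
  have xw: "cle x w" and wW: "cle w W" and lw: "length w = N"
    using w by (auto simp: mem_cinterval_iff)
  obtain l where l: "l < N" "\<not> x ! l" "w ! l"
    using cle_neq_imp_nth[OF xw] w(2) lx by metis
  have "cle (x[l := True]) w"
    using xw l lx by (auto simp: cle_iff nth_list_update)
  moreover have "\<phi> (x[l := True]) ! a"
    using x1 up l wW lw by (cases "l = j") (auto simp: cle_iff)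
  ultimately show ?thesis
    using nth_image_mono[of "x[l := True]" w a] lx a by simp
qed

lemma raises_image_top:
  assumes x: "raises j x a" and W: "length W = N" "cle x W" "W ! j"
    and up: "\<And>l. l < N \<Longrightarrow> l \<noteq> j \<Longrightarrow> \<not> x ! l \<Longrightarrow> W ! l \<Longrightarrow> \<phi> (x[l := True]) ! a"
  shows "\<phi> W = (\<phi> x)[a := True]"
proof -
  have lx: "length x = N" and x0: "\<not> \<phi> x ! a"
    using x unfolding raises_def by auto
  have xW: "x \<in> cinterval N x W" and WW: "W \<in> cinterval N x W"
    using W lx by (simp_all add: mem_cinterval_iff)
  have "W \<noteq> x"
    using W(3) x unfolding raises_def by auto
  have "\<phi> w ! a \<noteq> \<phi> x ! a" if "w \<in> cinterval N x W" "w \<noteq> x" for w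
    using raises_above[OF x up that] x0 by simp
  then have "\<phi> W = (\<phi> x)[a := \<not> \<phi> x ! a]"
    by (rule image_flip_on_cinterval[OF lx W(2) xW _ WW \<open>W \<noteq> x\<close>])
  then show ?thesis
    using x0 by simp
qed

lemma raises_below:
  assumes x: "raises j x a" and Zx: "cle Z x"
    and down: "\<And>l. l < N \<Longrightarrow> l \<noteq> j \<Longrightarrow> x ! l \<Longrightarrow> \<not> Z ! l \<Longrightarrow> \<not> \<phi> (x[l := False, j := True]) ! a"
    and w: "w \<in> cinterval N Z (x[j := True])" "w \<noteq> x[j := True]"
  shows "\<not> \<phi> w ! a"
proof -
  have a: "a < p" and xj: "\<not> x ! j" and x0: "\<not> \<phi> x ! a"
    using x unfolding raises_def by auto
  have Zw: "cle Z w" and wx': "cle w (x[j := True])" and lw: "length w = N"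
    using w by (auto simp: mem_cinterval_iff)
  obtain l where l: "l < N" "x[j := True] ! l" "\<not> w ! l"
    using cle_neq_imp_nth[OF wx'] w(2) lw by metis
  have "cle w (x[j := True, l := False])"
    using wx' l lw by (auto simp: cle_iff nth_list_update)
  moreover have "\<not> \<phi> (x[j := True, l := False]) ! a"
  proof (cases "l = j")
    case True
    then have "x[j := True, l := False] = x"
      using xj by (metis list_update_id list_update_overwrite)
    then show ?thesis
      using x0 by simp
  next
    case False
    then have "x[j := True, l := False] = x[l := False, j := True]"
      by (metis list_update_swap)
    moreover have "x ! l"
      using l(2) False by simp
    moreover have "\<not> Z ! l"
      using Zw l(1,3) lw unfolding cle_iff by metis
    ultimately show ?thesis
      using down l(1) False by simp
  qed
  ultimately show ?thesis
    using nth_image_mono[of w "x[j := True, l := False]" a] lw a by blast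
qed

lemma raises_image_bottom:
  assumes x: "raises j x a" and Z: "length Z = N" "cle Z x"
    and down: "\<And>l. l < N \<Longrightarrow> l \<noteq> j \<Longrightarrow> x ! l \<Longrightarrow> \<not> Z ! l \<Longrightarrow> \<not> \<phi> (x[l := False, j := True]) ! a"
  shows "\<phi> Z = \<phi> x"
proof -
  define x' where "x' = x[j := True]"
  have lx: "length x = N" and xj: "\<not> x ! j" and x1: "\<phi> x' ! a"
    using x unfolding raises_def x'_def by auto
  have Zx': "cle Z x'"
    using Z(2) cle_list_update_True cle_trans unfolding x'_def by blast
  have flip: "\<phi> w = (\<phi> x')[a := False]" if "w \<in> cinterval N Z x'" "w \<noteq> x'" for w
    using image_flip_on_cinterval[OF Z(1) Zx' _ _ that, where a = a] raises_below[OF x Z(2) down]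
      Zx' lx x1
    by (simp add: mem_cinterval_iff x'_def)
  have "x \<in> cinterval N Z x'" "Z \<in> cinterval N Z x'"
    using Z Zx' lx cle_list_update_True unfolding x'_def by (simp_all add: mem_cinterval_iff)
  moreover have "x' ! j" "\<not> x ! j" "\<not> Z ! j"
    using lx raises_imp_less[OF x] xj Z unfolding x'_def by (auto simp: cle_iff)
  ultimately show ?thesis
    using flip by metis
qed

lemma raises_join_meet:
  assumes x: "raises j x a" and y: "length y = N"
    and up: "\<And>l. l < N \<Longrightarrow> l \<noteq> j \<Longrightarrow> \<not> x ! l \<Longrightarrow> y ! l \<Longrightarrow> \<phi> (x[l := True]) ! a"
    and down: "\<And>l. l < N \<Longrightarrow> l \<noteq> j \<Longrightarrow> x ! l \<Longrightarrow> \<not> y ! l \<Longrightarrow> \<not> \<phi> (x[l := False, j := True]) ! a"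
  shows "\<phi> (map (\<lambda>l. x ! l \<or> y ! l \<or> l = j) [0..<N]) = (\<phi> x)[a := True]"
    and "\<phi> (map (\<lambda>l. x ! l \<and> y ! l) [0..<N]) = \<phi> x"
proof -
  have lx: "length x = N"
    using x unfolding raises_def by simp
  show "\<phi> (map (\<lambda>l. x ! l \<or> y ! l \<or> l = j) [0..<N]) = (\<phi> x)[a := True]"
  proof (rule raises_image_top[OF x])
    show "cle x (map (\<lambda>l. x ! l \<or> y ! l \<or> l = j) [0..<N])"
      using lx by (simp add: cle_iff)
    show "map (\<lambda>l. x ! l \<or> y ! l \<or> l = j) [0..<N] ! j"
      using raises_imp_less[OF x] by simp
    show "\<phi> (x[l := True]) ! a"
      if "l < N" "l \<noteq> j" "\<not> x ! l" "map (\<lambda>l. x ! l \<or> y ! l \<or> l = j) [0..<N] ! l" for l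
      using that up by simp
  qed simp
  show "\<phi> (map (\<lambda>l. x ! l \<and> y ! l) [0..<N]) = \<phi> x"
  proof (rule raises_image_bottom[OF x])
    show "cle (map (\<lambda>l. x ! l \<and> y ! l) [0..<N]) x"
      using lx by (simp add: cle_iff)
    show "\<not> \<phi> (x[l := False, j := True]) ! a"
      if "l < N" "l \<noteq> j" "x ! l" "\<not> map (\<lambda>l. x ! l \<and> y ! l) [0..<N] ! l" for l
      using that down by simp
  qed simp
qed

theorem raises_unique:
  assumes "raises j x a" and "raises j y b"
  shows "a = b"
  using assms
proof (induction "hamming x y" arbitrary: x y a b rule: less_induct)
  case less
  have lx: "length x = N" and ly: "length y = N"
    using less.prems unfolding raises_def by auto
  show "a = b"
  proof (rule ccontr)
    assume "a \<noteq> b"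
    have up: "\<phi> (u[l := True]) ! c"
      if u: "raises j u c" and v: "raises j v d" "c \<noteq> d" and uv: "hamming u v = hamming x y"
        and l: "l < N" "l \<noteq> j" "\<not> u ! l" "v ! l" for u v c d l
    proof (rule ccontr)
      assume "\<not> \<phi> (u[l := True]) ! c"
      then have "raises j (u[l := True]) c"
        using raises_list_update_True[OF u l(2)] by blast
      moreover have "hamming (u[l := True]) v < hamming x y"
        using hamming_list_update_less[of l u v] u l uv unfolding raises_def by simp
      ultimately show False
        using less.hyps v by blast
    qed
    have down: "\<not> \<phi> (u[l := False, j := True]) ! c"
      if u: "raises j u c" and v: "raises j v d" "c \<noteq> d" and uv: "hamming u v = hamming x y"
        and l: "l < N" "l \<noteq> j" "u ! l" "\<not> v ! l" for u v c d l
    proof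
      assume "\<phi> (u[l := False, j := True]) ! c"
      then have "raises j (u[l := False]) c"
        using raises_list_update_False[OF u l(2)] by blast
      moreover have "hamming (u[l := False]) v < hamming x y"
        using hamming_list_update_less[of l u v] u l uv unfolding raises_def by simp
      ultimately show False
        using less.hyps v by blast
    qed
    have yx: "hamming y x = hamming x y"
      using hamming_sym lx ly by simp
    note from_x = raises_join_meet[OF less.prems(1) ly
        up[OF less.prems(1,2) \<open>a \<noteq> b\<close> refl] down[OF less.prems(1,2) \<open>a \<noteq> b\<close> refl]]
    note from_y = raises_join_meet[OF less.prems(2) lx
        up[OF less.prems(2,1) \<open>a \<noteq> b\<close>[symmetric] yx] down[OF less.prems(2,1) \<open>a \<noteq> b\<close>[symmetric] yx]]
    have "(\<phi> x)[a := True] = (\<phi> y)[b := True]" and "\<phi> x = \<phi> y"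
      using from_x from_y by (simp_all add: disj_left_commute conj_commute)
    then have "(\<phi> x)[a := True] ! a = (\<phi> x)[b := True] ! a"
      by simp
    then show False
      using less.prems(1) \<open>a \<noteq> b\<close> length_image[OF lx] unfolding raises_def by simp
  qed
qed

text \<open>Coordinates raising nothing are assigned to output 0; any value below \<open>p\<close> would do.\<close>
definition owner :: "nat \<Rightarrow> nat" where
  "owner j = (if \<exists>x a. raises j x a then SOME a. \<exists>x. raises j x a else 0)"

lemma owner_eq:
  assumes "raises j x a"
  shows "owner j = a"
proof -
  have "\<exists>x'. raises j x' (SOME a. \<exists>x. raises j x a)"
    using assms by (intro someI_ex[of "\<lambda>a. \<exists>x. raises j x a"]) blast
  then have "(SOME a. \<exists>x. raises j x a) = a"
    using raises_unique assms by blast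
  then show ?thesis
    using assms unfolding owner_def by auto
qed

lemma owner_less:
  assumes "0 < p"
  shows "owner j < p"
proof (cases "\<exists>x a. raises j x a")
  case True
  then obtain x a where "raises j x a"
    by blast
  then show ?thesis
    using owner_eq unfolding raises_def by blast
next
  case False
  then have "owner j = 0"
    unfolding owner_def by metis
  then show ?thesis
    using assms by simp
qed

lemma nth_image_list_update:
  assumes lx: "length x = N" and i: "i < p" and "owner l \<noteq> i"
  shows "\<phi> (x[l := c]) ! i = \<phi> x ! i"
proof -
  have "\<phi> (x[l := False]) ! i = \<phi> (x[l := True]) ! i"
  proof (cases "l < N")
    case True
    have "\<not> raises l (x[l := False]) i"
      using owner_eq assms(3) by blast
    moreover have "\<phi> (x[l := False]) ! i \<longrightarrow> \<phi> (x[l := True]) ! i"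
      using nth_image_mono[of "x[l := False]" "x[l := True]" i] cle_list_update_True[of "x[l := False]" l] lx i
      by simp
    ultimately show ?thesis
      using lx i True unfolding raises_def by auto
  qed (simp add: lx list_update_beyond)
  then show ?thesis
    by (metis (full_types) list_update_id)
qed

lemma nth_image_local:
  assumes "length x = N" and "length x' = N" and "i < p"
    and "\<And>l. l < N \<Longrightarrow> owner l = i \<Longrightarrow> x ! l = x' ! l"
  shows "\<phi> x ! i = \<phi> x' ! i"
  using assms
proof (induction "hamming x x'" arbitrary: x rule: less_induct)
  case less
  show ?case
  proof (cases "x = x'")
    case False
    then have "\<exists>l<length x. x ! l \<noteq> x' ! l"
      using less.prems(1,2) by (simp add: list_eq_iff_nth_eq)
    then obtain l where l: "l < N" "x ! l \<noteq> x' ! l"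
      using less.prems(1) by blast
    then have "owner l \<noteq> i"
      using less.prems(4) by blast
    have "\<phi> (x[l := x' ! l]) ! i = \<phi> x' ! i"
    proof (rule less.hyps)
      show "hamming (x[l := x' ! l]) x' < hamming x x'"
        using hamming_list_update_less l less.prems(1) by simp
      show "x[l := x' ! l] ! l' = x' ! l'" if "l' < N" "owner l' = i" for l'
        using that less.prems(4) \<open>owner l \<noteq> i\<close> by (cases "l' = l") auto
    qed (use less.prems(1-3) in simp_all)
    moreover have "\<phi> (x[l := x' ! l]) ! i = \<phi> x ! i"
      using nth_image_list_update[OF less.prems(1,3) \<open>owner l \<noteq> i\<close>] .
    ultimately show ?thesis
      by simp
  qed simp
qed

end

theorem mainTheorem9:
  fixes m n :: nat and \<phi> :: "bool list \<Rightarrow> bool list"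
  assumes "box_morphism (m + n + 1) (n + 1) \<phi>"
    and "\<phi> ` cube (m + n + 1) = cube (n + 1)"
  shows "\<exists>(k :: nat \<Rightarrow> nat) (\<phi>s :: nat \<Rightarrow> bool list \<Rightarrow> bool) (\<sigma> :: nat \<Rightarrow> nat).
           (\<Sum>i<n + 1. k i) = m + n + 1 \<and>
           (\<forall>i<n + 1. cmono (k i) (\<phi>s i) (\<le>)) \<and>
           \<sigma> permutes {0..<m + n + 1} \<and>
           (\<forall>x\<in>cube (m + n + 1).
              \<phi> x = prod_map (n + 1) k \<phi>s (coord_perm (m + n + 1) \<sigma> x))"
proof -
  interpret box_map "m + n + 1" "n + 1" \<phi>
    by unfold_locales (rule assms(1))
  show ?thesis
  proof (rule prod_map_decomposition[where c = owner])
    show "owner l < n + 1" for l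
      using owner_less by simp
  qed (fact length_image nth_image_mono nth_image_local)+
qed

end
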